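(* Let $G$ be a split graph with vertex partition $\{X,Y\}$, where $X=\{v_1,\ldots,v_n\}$ is a maximal clique of $G$ and $Y=V(G)\setminus X$ is a stable set, and write $d_i=|N_G(v_i)\cap Y|$, with $d_1\ge\cdots\ge d_n$ and $d_{\lfloor n/2\rfloor}\ge 1$. If $n\ge 3$, then $G$ admits a decomposition into locally irregular subgraphs and $\chi'_{\rm irr}(G)\le 2$.
   Context: All graphs are finite and simple. A graph is locally irregular if any two adjacent vertices have distinct degrees. A locally irregular decomposition of $G$ is a collection of locally irregular subgraphs whose edge sets partition $E(G)$; for a graph admitting one, $\chi'_{\rm irr}(G)$ is the minimum number of subgraphs in such a decomposition. *)

theory Defs
  imports Main
begin

definition graph :: "'a set \<Rightarrow> 'a set set \<Rightarrow> bool" where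
  "graph V E \<longleftrightarrow> finite V \<and> (\<forall>e\<in>E. e \<subseteq> V \<and> card e = 2)"

definition adj :: "'a set set \<Rightarrow> 'a \<Rightarrow> 'a \<Rightarrow> bool" where
  "adj E u v \<longleftrightarrow> {u, v} \<in> E"

definition nbhd :: "'a set set \<Rightarrow> 'a \<Rightarrow> 'a set" where
  "nbhd E v = {u. adj E v u}"

definition deg :: "'a set set \<Rightarrow> 'a \<Rightarrow> nat" where
  "deg F v = card {e \<in> F. v \<in> e}"

definition locally_irregular :: "'a set set \<Rightarrow> bool" where
  "locally_irregular F \<longleftrightarrow> (\<forall>u v. {u, v} \<in> F \<longrightarrow> deg F u \<noteq> deg F v)"

definition li_decomposition :: "'a set set \<Rightarrow> nat \<Rightarrow> (nat \<Rightarrow> 'a set set) \<Rightarrow> bool" where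
  "li_decomposition E k P \<longleftrightarrow>
     (\<Union>i<k. P i) = E \<and>
     (\<forall>i<k. \<forall>j<k. i \<noteq> j \<longrightarrow> P i \<inter> P j = {}) \<and>
     (\<forall>i<k. locally_irregular (P i))"

definition decomposable :: "'a set set \<Rightarrow> bool" where
  "decomposable E \<longleftrightarrow> (\<exists>k P. li_decomposition E k P)"

definition chi_irr :: "'a set set \<Rightarrow> nat" where
  "chi_irr E = (LEAST k. \<exists>P. li_decomposition E k P)"

definition clique :: "'a set set \<Rightarrow> 'a set \<Rightarrow> bool" where
  "clique E X \<longleftrightarrow> (\<forall>u\<in>X. \<forall>v\<in>X. u \<noteq> v \<longrightarrow> adj E u v)"

definition maximal_clique :: "'a set \<Rightarrow> 'a set set \<Rightarrow> 'a set \<Rightarrow> bool" where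
  "maximal_clique V E X \<longleftrightarrow> X \<subseteq> V \<and> clique E X \<and>
     (\<forall>Z. X \<subset> Z \<and> Z \<subseteq> V \<longrightarrow> \<not> clique E Z)"

definition stable :: "'a set set \<Rightarrow> 'a set \<Rightarrow> bool" where
  "stable E Y \<longleftrightarrow> (\<forall>u\<in>Y. \<forall>v\<in>Y. \<not> adj E u v)"

end

theory Submission
  imports Defs
begin

text \<open>Label the clique vertices \<open>\<sigma> 1, \<dots>, \<sigma> n\<close> so that the \<open>Y\<close>-degrees \<open>e p\<close> decrease on
  the lower half \<open>p \<le> h\<close> and increase on the upper half, where \<open>h = s div 2\<close> for a suitable
  \<open>s \<in> {n, n + 1}\<close>. Colour an edge red if it joins \<open>\<sigma> p, \<sigma> q\<close> with \<open>p + q \<le> s\<close>, or joins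
  \<open>\<sigma> p\<close> with \<open>p \<le> h\<close> to \<open>Y\<close>; all other edges are blue. On \<open>X\<close> the red degree then
  strictly decreases and the blue degree strictly increases along every edge of its colour,
  while a vertex of \<open>Y\<close> has red degree at most \<open>h\<close> and blue degree at most \<open>n - h\<close>, which is
  below the degree of its clique neighbours except in a single boundary configuration. The
  parity of \<open>n\<close>, a possible swap of the two middle labels, and the maximality of \<open>X\<close> are used
  to choose \<open>s\<close> so that this configuration does not occur.\<close>

lemma card_partner_labels:
  fixes p s n :: nat
  assumes "1 \<le> p" "p \<le> n" "n \<le> s" "s \<le> n + 1"
  shows "card {q \<in> {1..n}. q \<noteq> p \<and> p + q \<le> s} + p + (if 2 * p \<le> s then 1 else 0) = s"
proof -
  have "{q \<in> {1..n}. q \<noteq> p \<and> p + q \<le> s} = {1..s - p} - {p}" using assms by auto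
  then show ?thesis using assms by (simp add: card_Diff_singleton_if) arith
qed

lemma graph_edgeD:
  assumes "graph V E" "{a, b} \<in> E"
  shows "a \<in> V" "b \<in> V" "a \<noteq> b"
proof -
  have "{a, b} \<subseteq> V" "card {a, b} = 2" using assms unfolding graph_def by auto
  then show "a \<in> V" "b \<in> V" "a \<noteq> b" by (auto simp: card_insert_if split: if_splits)
qed

lemma deg_eq_card_nbhd:
  assumes "graph V E" "F \<subseteq> E"
  shows "deg F x = card (nbhd F x)"
proof -
  have "bij_betw (\<lambda>u. {x, u}) (nbhd F x) {e \<in> F. x \<in> e}"
  proof (rule bij_betwI')
    show "({x, a} = {x, b}) = (a = b)" for a b by (auto simp: doubleton_eq_iff)
    show "{x, a} \<in> {e \<in> F. x \<in> e}" if "a \<in> nbhd F x" for a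
      using that unfolding nbhd_def adj_def by auto
    fix e assume e: "e \<in> {e \<in> F. x \<in> e}"
    then have "card e = 2" using assms unfolding graph_def by auto
    then obtain a b where "e = {a, b}" by (auto simp: card_2_iff)
    with e show "\<exists>u\<in>nbhd F x. e = {x, u}"
      unfolding nbhd_def adj_def by (auto simp: insert_commute)
  qed
  then show ?thesis unfolding deg_def by (simp add: bij_betw_same_card)
qed

lemma chi_irr_le_2_if_irregular_bipartition:
  assumes "R \<subseteq> E" "locally_irregular R" "locally_irregular (E - R)"
  shows "decomposable E \<and> chi_irr E \<le> 2"
proof -
  define P where "P = (\<lambda>i::nat. if i = 0 then R else E - R)"
  have less_2: "i < 2 \<longleftrightarrow> i = 0 \<or> i = 1" for i :: nat by auto
  have "li_decomposition E 2 P"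
    unfolding li_decomposition_def P_def less_2 lessThan_def using assms by auto
  then show ?thesis unfolding decomposable_def chi_irr_def by (auto intro: Least_le)
qed

locale split_graph =
  fixes V :: "'a set" and E :: "'a set set" and X Y :: "'a set"
  assumes graph: "graph V E" and max_clique: "maximal_clique V E X"
    and Y_eq: "Y = V - X" and stable_Y: "stable E Y"
begin

definition Y_dominated :: "'a set \<Rightarrow> bool" where
  "Y_dominated S \<longleftrightarrow> (\<exists>y\<in>Y. S \<subseteq> nbhd E y)"

lemma finite_V: "finite V"
  using graph unfolding graph_def by auto

lemma X_subset_V: "X \<subseteq> V" and clique_X: "clique E X"
  using max_clique unfolding maximal_clique_def by auto

lemma finite_X: "finite X"
  using finite_V X_subset_V finite_subset by blast

lemma nbhd_subset_V: "nbhd E x \<subseteq> V"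
  using graph_edgeD[OF graph] unfolding nbhd_def adj_def by auto

lemma finite_nbhd: "finite (nbhd E x)"
  using nbhd_subset_V finite_V finite_subset by blast

lemma edge_cases:
  assumes "{a, b} \<in> E"
  shows "(a \<in> X \<and> b \<in> X) \<or> (a \<in> X \<and> b \<in> Y) \<or> (a \<in> Y \<and> b \<in> X)"
  using graph_edgeD[OF graph assms] stable_Y assms Y_eq unfolding stable_def adj_def by blast

lemma nbhd_clique_vertex:
  assumes "x \<in> X"
  shows "nbhd E x = (X - {x}) \<union> (nbhd E x \<inter> Y)"
proof -
  have "X - {x} \<subseteq> nbhd E x" using clique_X assms unfolding clique_def nbhd_def by auto
  moreover have "x \<notin> nbhd E x"
    using graph_edgeD(3)[OF graph, of x x] unfolding nbhd_def adj_def by auto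
  ultimately show ?thesis using nbhd_subset_V Y_eq by auto
qed

lemma not_Y_dominated_X: "\<not> Y_dominated X"
proof
  assume "Y_dominated X"
  then obtain y where y: "y \<in> Y" "X \<subseteq> nbhd E y" unfolding Y_dominated_def by blast
  have "clique E (insert y X)"
    using clique_X y unfolding clique_def nbhd_def adj_def by (auto simp: insert_commute)
  moreover have "X \<subset> insert y X" "insert y X \<subseteq> V" using y Y_eq X_subset_V by auto
  ultimately show False using max_clique unfolding maximal_clique_def by blast
qed

lemma Y_neighbour_unique:
  assumes "card (nbhd E x \<inter> Y) = 1" "y \<in> Y" "y' \<in> Y" "x \<in> nbhd E y" "x \<in> nbhd E y'"
  shows "y = y'"
proof -
  have "y \<in> nbhd E x \<inter> Y" "y' \<in> nbhd E x \<inter> Y"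
    using assms unfolding nbhd_def adj_def by (auto simp: insert_commute)
  moreover obtain z where "nbhd E x \<inter> Y = {z}" using assms(1) by (auto simp: card_1_singleton_iff)
  ultimately show ?thesis by auto
qed

lemma Y_dominated_Un:
  assumes "Y_dominated A" "Y_dominated B" "x \<in> A \<inter> B" "card (nbhd E x \<inter> Y) = 1"
  shows "Y_dominated (A \<union> B)"
proof -
  obtain y y' where "y \<in> Y" "A \<subseteq> nbhd E y" "y' \<in> Y" "B \<subseteq> nbhd E y'"
    using assms(1,2) unfolding Y_dominated_def by blast
  moreover have "y = y'" using Y_neighbour_unique assms(3,4) calculation by blast
  ultimately show ?thesis unfolding Y_dominated_def by blast
qed

end

locale red_blue_split = split_graph +
  fixes \<sigma> :: "nat \<Rightarrow> 'a" and n s h :: nat and e :: "nat \<Rightarrow> nat"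
  assumes labelling: "bij_betw \<sigma> {1..n} X" and n_ge_3: "n \<ge> 3"
    and s_cases: "s = n \<or> s = n + 1" and h_eq: "h = s div 2"
    and e_eq: "\<And>p. e p = card (nbhd E (\<sigma> p) \<inter> Y)"
    and e_antimono_low: "\<And>p q. 1 \<le> p \<Longrightarrow> p \<le> q \<Longrightarrow> q \<le> h \<Longrightarrow> e q \<le> e p"
    and e_mono_high: "\<And>p q. h < p \<Longrightarrow> p \<le> q \<Longrightarrow> q \<le> n \<Longrightarrow> e p \<le> e q"
    and odd_boundary: "odd s \<Longrightarrow> e h \<ge> 1 \<and> \<not> (e (h + 1) = 1 \<and> Y_dominated (\<sigma> ` {h + 1..n}))"
    and even_boundary: "even s \<Longrightarrow> e (h + 1) \<ge> 1 \<and> \<not> (e h = 1 \<and> Y_dominated (\<sigma> ` {1..h}))"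
begin

definition label :: "'a \<Rightarrow> nat" where
  "label = the_inv_into {1..n} \<sigma>"

lemma sigma_in: "p \<in> {1..n} \<Longrightarrow> \<sigma> p \<in> X"
  using labelling bij_betwE by blast

lemma label_in: "x \<in> X \<Longrightarrow> label x \<in> {1..n}"
  unfolding label_def using labelling by (metis bij_betw_def the_inv_into_into order_refl)

lemma label_sigma: "p \<in> {1..n} \<Longrightarrow> label (\<sigma> p) = p"
  unfolding label_def using labelling by (simp add: bij_betw_def the_inv_into_f_f)

lemma sigma_label: "x \<in> X \<Longrightarrow> \<sigma> (label x) = x"
  unfolding label_def using labelling by (simp add: bij_betw_def f_the_inv_into_f)

lemma sigma_image_Collect: "\<sigma> ` {q \<in> {1..n}. P q} = {x \<in> X. P (label x)}"
proof (intro equalityI subsetI)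
  show "x \<in> {x \<in> X. P (label x)}" if "x \<in> \<sigma> ` {q \<in> {1..n}. P q}" for x
    using that sigma_in label_sigma by auto
  show "x \<in> \<sigma> ` {q \<in> {1..n}. P q}" if "x \<in> {x \<in> X. P (label x)}" for x
    using that label_in sigma_label by (auto intro!: rev_image_eqI[of "label x"])
qed

lemma card_sigma_image: "A \<subseteq> {1..n} \<Longrightarrow> card (\<sigma> ` A) = card A"
  using labelling by (meson bij_betw_def card_image inj_on_subset)

lemma h_bounds: "1 \<le> h" "h < n" "s = 2 * h \<or> s = 2 * h + 1"
  using h_eq s_cases n_ge_3 by auto

definition red :: "'a \<Rightarrow> 'a \<Rightarrow> bool" where
  "red a b \<longleftrightarrow> (a \<in> X \<and> b \<in> X \<and> label a + label b \<le> s)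
     \<or> (a \<in> X \<and> b \<in> Y \<and> label a \<le> h) \<or> (a \<in> Y \<and> b \<in> X \<and> label b \<le> h)"

definition red_edges :: "'a set set" where
  "red_edges = {f \<in> E. \<exists>a b. f = {a, b} \<and> red a b}"

abbreviation blue_edges :: "'a set set" where
  "blue_edges \<equiv> E - red_edges"

lemma red_edge_iff: "{a, b} \<in> red_edges \<longleftrightarrow> {a, b} \<in> E \<and> red a b"
  unfolding red_edges_def red_def by (auto simp: doubleton_eq_iff)

lemma nbhd_red: "nbhd red_edges x = {u \<in> nbhd E x. red x u}"
  and nbhd_blue: "nbhd blue_edges x = {u \<in> nbhd E x. \<not> red x u}"
  unfolding nbhd_def adj_def using red_edge_iff by auto

lemma deg_red: "deg red_edges x = card (nbhd red_edges x)"
  and deg_blue: "deg blue_edges x = card (nbhd blue_edges x)"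
  using deg_eq_card_nbhd[OF graph] red_edges_def by blast+

lemma nbhd_red_clique_vertex:
  assumes p: "p \<in> {1..n}"
  shows "nbhd red_edges (\<sigma> p) =
    \<sigma> ` {q \<in> {1..n}. q \<noteq> p \<and> p + q \<le> s} \<union> (if p \<le> h then nbhd E (\<sigma> p) \<inter> Y else {})"
proof -
  have "{u \<in> X - {\<sigma> p}. red (\<sigma> p) u} = \<sigma> ` {q \<in> {1..n}. q \<noteq> p \<and> p + q \<le> s}"
    unfolding sigma_image_Collect red_def using p Y_eq sigma_in label_sigma sigma_label by auto
  moreover have "{u \<in> nbhd E (\<sigma> p) \<inter> Y. red (\<sigma> p) u} = (if p \<le> h then nbhd E (\<sigma> p) \<inter> Y else {})"
    using Y_eq p sigma_in label_sigma unfolding red_def by auto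
  moreover have "nbhd red_edges (\<sigma> p) =
      {u \<in> X - {\<sigma> p}. red (\<sigma> p) u} \<union> {u \<in> nbhd E (\<sigma> p) \<inter> Y. red (\<sigma> p) u}"
    using nbhd_clique_vertex[OF sigma_in[OF p]] unfolding nbhd_red by blast
  ultimately show ?thesis by simp
qed

lemma card_nbhd_clique_vertex:
  assumes p: "p \<in> {1..n}"
  shows "card (nbhd E (\<sigma> p)) + 1 = n + e p"
proof -
  have "finite (X - {\<sigma> p})" "finite (nbhd E (\<sigma> p) \<inter> Y)"
    "(X - {\<sigma> p}) \<inter> (nbhd E (\<sigma> p) \<inter> Y) = {}"
    using finite_X finite_nbhd Y_eq by auto
  then have "card (nbhd E (\<sigma> p)) = card (X - {\<sigma> p}) + card (nbhd E (\<sigma> p) \<inter> Y)"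
    using nbhd_clique_vertex[OF sigma_in[OF p]] by (metis card_Un_disjoint)
  moreover have "card X = n" using labelling bij_betw_same_card by fastforce
  ultimately show ?thesis using e_eq sigma_in[OF p] finite_X n_ge_3 by simp
qed

lemma deg_red_clique_vertex:
  assumes p: "p \<in> {1..n}"
  shows "deg red_edges (\<sigma> p) + p + (if p \<le> h then 1 else 0) = s + (if p \<le> h then e p else 0)"
proof -
  let ?Q = "{q \<in> {1..n}. q \<noteq> p \<and> p + q \<le> s}"
  let ?W = "if p \<le> h then nbhd E (\<sigma> p) \<inter> Y else {}"
  have "\<sigma> ` ?Q \<inter> ?W = {}" using sigma_in Y_eq by auto
  moreover have "card (\<sigma> ` ?Q) = card ?Q" by (rule card_sigma_image) auto
  ultimately have "card (nbhd red_edges (\<sigma> p)) = card ?Q + card ?W"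
    unfolding nbhd_red_clique_vertex[OF p] using finite_nbhd by (simp add: card_Un_disjoint)
  moreover have "card ?Q + p + (if 2 * p \<le> s then 1 else 0) = s"
    using card_partner_labels[of p n s] p s_cases by auto
  ultimately show ?thesis using deg_red e_eq h_eq by (auto split: if_splits)
qed

lemma deg_blue_clique_vertex:
  assumes p: "p \<in> {1..n}"
  shows "deg blue_edges (\<sigma> p) + s + (if h < p then 1 else 0) = n + p + (if h < p then e p else 0)"
proof -
  have "nbhd red_edges (\<sigma> p) \<subseteq> nbhd E (\<sigma> p)"
    and "nbhd blue_edges (\<sigma> p) = nbhd E (\<sigma> p) - nbhd red_edges (\<sigma> p)"
    unfolding nbhd_red nbhd_blue by auto
  then have "card (nbhd blue_edges (\<sigma> p)) + card (nbhd red_edges (\<sigma> p)) = card (nbhd E (\<sigma> p))"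
    using finite_nbhd by (metis card_Diff_subset finite_subset card_mono le_add_diff_inverse2)
  then show ?thesis using deg_red deg_blue deg_red_clique_vertex[OF p] card_nbhd_clique_vertex[OF p]
    by (auto split: if_splits)
qed

lemma nbhd_Y_vertex: "y \<in> Y \<Longrightarrow> nbhd E y \<subseteq> X"
  using edge_cases Y_eq unfolding nbhd_def adj_def by blast

lemma nbhd_red_Y_vertex:
  assumes y: "y \<in> Y"
  shows "nbhd red_edges y \<subseteq> \<sigma> ` {1..h}"
proof
  fix u assume "u \<in> nbhd red_edges y"
  then have "u \<in> X" "label u \<le> h"
    using nbhd_Y_vertex[OF y] y Y_eq unfolding nbhd_red red_def by auto
  then show "u \<in> \<sigma> ` {1..h}" using label_in sigma_label by (auto intro!: rev_image_eqI[of "label u"])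
qed

lemma nbhd_blue_Y_vertex:
  assumes y: "y \<in> Y"
  shows "nbhd blue_edges y \<subseteq> \<sigma> ` {h + 1..n}"
proof
  fix u assume "u \<in> nbhd blue_edges y"
  then have "u \<in> X" "h < label u"
    using nbhd_Y_vertex[OF y] y Y_eq unfolding nbhd_blue red_def by auto
  then show "u \<in> \<sigma> ` {h + 1..n}" using label_in sigma_label by (auto intro!: rev_image_eqI[of "label u"])
qed

lemma deg_red_clique_decreasing:
  assumes "1 \<le> p" "p < q" "q \<le> n" "p + q \<le> s"
  shows "deg red_edges (\<sigma> q) < deg red_edges (\<sigma> p)"
proof -
  have "p \<le> h" using assms h_bounds(3) by linarith
  then have dp: "deg red_edges (\<sigma> p) + p + 1 = s + e p"
    using deg_red_clique_vertex[of p] assms by simp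
  show ?thesis
  proof (cases "q \<le> h")
    case True
    then have "deg red_edges (\<sigma> q) + q + 1 = s + e q"
      using deg_red_clique_vertex[of q] assms by simp
    then show ?thesis using dp e_antimono_low[of p q] True assms by linarith
  next
    case False
    then have dq: "deg red_edges (\<sigma> q) + q = s"
      using deg_red_clique_vertex[of q] assms by simp
    have "1 \<le> e p" if "q = p + 1"
    proof -
      have "p = h" "odd s" using that False \<open>p \<le> h\<close> assms h_bounds(3) by auto
      then show ?thesis using odd_boundary by simp
    qed
    then show ?thesis using dp dq assms by linarith
  qed
qed

lemma deg_blue_clique_increasing:
  assumes "1 \<le> p" "p < q" "q \<le> n" "s < p + q"
  shows "deg blue_edges (\<sigma> p) < deg blue_edges (\<sigma> q)"
proof -
  have "h < q" using assms h_bounds(3) by linarith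
  then have dq: "deg blue_edges (\<sigma> q) + s + 1 = n + q + e q"
    using deg_blue_clique_vertex[of q] assms by simp
  show ?thesis
  proof (cases "h < p")
    case True
    then have "deg blue_edges (\<sigma> p) + s + 1 = n + p + e p"
      using deg_blue_clique_vertex[of p] assms by simp
    then show ?thesis using dq e_mono_high[of p q] True assms by linarith
  next
    case False
    then have dp: "deg blue_edges (\<sigma> p) + s = n + p"
      using deg_blue_clique_vertex[of p] assms by simp
    have "1 \<le> e q" if "q = p + 1"
    proof -
      have "q = h + 1" "even s" using that False \<open>h < q\<close> assms h_bounds(3) by auto
      then show ?thesis using even_boundary by simp
    qed
    then show ?thesis using dp dq assms by linarith
  qed
qed

lemma e_pos_if_Y_neighbour:
  assumes "y \<in> Y" "{\<sigma> p, y} \<in> E"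
  shows "1 \<le> e p"
proof -
  have "y \<in> nbhd E (\<sigma> p) \<inter> Y" using assms unfolding nbhd_def adj_def by auto
  then have "nbhd E (\<sigma> p) \<inter> Y \<noteq> {}" by blast
  then show ?thesis using e_eq finite_nbhd by (simp add: Suc_le_eq card_gt_0_iff)
qed

lemma deg_red_Y_less:
  assumes p: "p \<in> {1..n}" "p \<le> h" and y: "y \<in> Y" and edge: "{\<sigma> p, y} \<in> E"
  shows "deg red_edges y < deg red_edges (\<sigma> p)"
proof (rule ccontr)
  assume "\<not> ?thesis"
  moreover have "deg red_edges (\<sigma> p) + p + 1 = s + e p"
    using deg_red_clique_vertex[OF p(1)] p(2) by simp
  moreover have card_lower: "card (\<sigma> ` {1..h}) = h"
    using card_sigma_image[of "{1..h}"] h_bounds by simp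
  moreover have "deg red_edges y \<le> h"
    using card_mono[OF _ nbhd_red_Y_vertex[OF y]] card_lower deg_red by simp
  ultimately have "deg red_edges y = h" "p = h" "e p = 1" "s = 2 * h"
    using e_pos_if_Y_neighbour[OF y edge] p(2) h_bounds(3) by linarith+
  then have "nbhd red_edges y = \<sigma> ` {1..h}"
    using card_subset_eq[OF _ nbhd_red_Y_vertex[OF y]] card_lower deg_red by simp
  then have "Y_dominated (\<sigma> ` {1..h})"
    using y unfolding Y_dominated_def nbhd_red by blast
  with \<open>p = h\<close> \<open>e p = 1\<close> \<open>s = 2 * h\<close> show False using even_boundary by simp
qed

lemma deg_blue_Y_less:
  assumes p: "p \<in> {1..n}" "h < p" and y: "y \<in> Y" and edge: "{\<sigma> p, y} \<in> E"
  shows "deg blue_edges y < deg blue_edges (\<sigma> p)"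
proof (rule ccontr)
  assume "\<not> ?thesis"
  moreover have "deg blue_edges (\<sigma> p) + s + 1 = n + p + e p"
    using deg_blue_clique_vertex[OF p(1)] p(2) by simp
  moreover have card_upper: "card (\<sigma> ` {h + 1..n}) = n - h"
    using card_sigma_image[of "{h + 1..n}"] by simp
  moreover have "deg blue_edges y \<le> n - h"
    using card_mono[OF _ nbhd_blue_Y_vertex[OF y]] card_upper deg_blue by simp
  ultimately have "deg blue_edges y = n - h" "p = h + 1" "e p = 1" "s = 2 * h + 1"
    using e_pos_if_Y_neighbour[OF y edge] p(2) h_bounds by linarith+
  then have "nbhd blue_edges y = \<sigma> ` {h + 1..n}"
    using card_subset_eq[OF _ nbhd_blue_Y_vertex[OF y]] card_upper deg_blue by simp
  then have "Y_dominated (\<sigma> ` {h + 1..n})"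
    using y unfolding Y_dominated_def nbhd_blue by blast
  with \<open>p = h + 1\<close> \<open>e p = 1\<close> \<open>s = 2 * h + 1\<close> show False using odd_boundary by simp
qed

lemma locally_irregular_by_labels:
  assumes F: "F \<subseteq> E"
    and clique: "\<And>p q. p \<in> {1..n} \<Longrightarrow> q \<in> {1..n} \<Longrightarrow> p < q \<Longrightarrow> {\<sigma> p, \<sigma> q} \<in> F
      \<Longrightarrow> deg F (\<sigma> p) \<noteq> deg F (\<sigma> q)"
    and cross: "\<And>p y. p \<in> {1..n} \<Longrightarrow> y \<in> Y \<Longrightarrow> {\<sigma> p, y} \<in> F \<Longrightarrow> deg F (\<sigma> p) \<noteq> deg F y"
  shows "locally_irregular F"
  unfolding locally_irregular_def
proof (intro allI impI)
  fix a b assume ab: "{a, b} \<in> F"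
  then have ba: "{b, a} \<in> F" by (simp add: insert_commute)
  consider "a \<in> X" "b \<in> X" | "a \<in> X" "b \<in> Y" | "a \<in> Y" "b \<in> X"
    using edge_cases ab F by blast
  then show "deg F a \<noteq> deg F b"
  proof cases
    case 1
    then have "label a \<noteq> label b"
      using graph_edgeD(3)[OF graph] ab F sigma_label by fastforce
    then show ?thesis
      using clique[of "label a" "label b"] clique[of "label b" "label a"] ab ba 1 label_in sigma_label
      by (metis linorder_neq_iff)
  next
    case 2
    then show ?thesis using cross[of "label a" b] ab label_in sigma_label by auto
  next
    case 3
    then show ?thesis using cross[of "label b" a] ba label_in sigma_label by fastforce
  qed
qed

lemma locally_irregular_red: "locally_irregular red_edges"
proof (rule locally_irregular_by_labels)
  show "red_edges \<subseteq> E" by (auto simp: red_edges_def)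
next
  fix p q assume pq: "p \<in> {1..n}" "q \<in> {1..n}" "p < q" "{\<sigma> p, \<sigma> q} \<in> red_edges"
  then have "p + q \<le> s" using red_edge_iff label_sigma sigma_in Y_eq unfolding red_def by auto
  then show "deg red_edges (\<sigma> p) \<noteq> deg red_edges (\<sigma> q)"
    using deg_red_clique_decreasing[of p q] pq by simp
next
  fix p y assume py: "p \<in> {1..n}" "y \<in> Y" "{\<sigma> p, y} \<in> red_edges"
  then have "p \<le> h" "{\<sigma> p, y} \<in> E"
    using red_edge_iff label_sigma sigma_in Y_eq unfolding red_def by auto
  then show "deg red_edges (\<sigma> p) \<noteq> deg red_edges y"
    using deg_red_Y_less py by fastforce
qed

lemma locally_irregular_blue: "locally_irregular blue_edges"
proof (rule locally_irregular_by_labels)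
  show "blue_edges \<subseteq> E" by blast
next
  fix p q assume pq: "p \<in> {1..n}" "q \<in> {1..n}" "p < q" "{\<sigma> p, \<sigma> q} \<in> blue_edges"
  then have "s < p + q" using red_edge_iff label_sigma sigma_in unfolding red_def by auto
  then show "deg blue_edges (\<sigma> p) \<noteq> deg blue_edges (\<sigma> q)"
    using deg_blue_clique_increasing[of p q] pq by simp
next
  fix p y assume py: "p \<in> {1..n}" "y \<in> Y" "{\<sigma> p, y} \<in> blue_edges"
  then have "h < p" using red_edge_iff label_sigma sigma_in Y_eq unfolding red_def by auto
  then show "deg blue_edges (\<sigma> p) \<noteq> deg blue_edges y"
    using deg_blue_Y_less py by fastforce
qed

end

context split_graph
begin

lemma irregular_bipartition_if_labelling:
  fixes u :: "nat \<Rightarrow> 'a" and n s h :: nat and f :: "nat \<Rightarrow> nat"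
  assumes u: "bij_betw u {1..n} X" and n: "n \<ge> 3"
    and s: "s = n \<or> s = n + 1" and h: "h = s div 2"
    and f_eq: "\<And>i. f i = card (nbhd E (u i) \<inter> Y)"
    and f_antimono: "\<And>i j. 1 \<le> i \<Longrightarrow> i \<le> j \<Longrightarrow> j \<le> n \<Longrightarrow> f j \<le> f i"
    and odd_s: "odd s \<Longrightarrow> f h \<ge> 1 \<and> \<not> (f n = 1 \<and> Y_dominated (u ` {h + 1..n}))"
    and even_s: "even s \<Longrightarrow> f n \<ge> 1 \<and> \<not> (f h = 1 \<and> Y_dominated (u ` {1..h}))"
  shows "\<exists>R \<subseteq> E. locally_irregular R \<and> locally_irregular (E - R)"
proof -
  have h_bounds: "1 \<le> h" "h < n" using h s n by auto
  \<comment> \<open>Reverse the upper half of the labelling, so that the \<open>Y\<close>-degrees increase there.\<close>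
  define \<tau> where "\<tau> p = (if p \<le> h then p else n + h + 1 - p)" for p
  have \<tau>_upper: "\<tau> p = n + h + 1 - p" if "h < p" for p using that unfolding \<tau>_def by auto
  have \<tau>_involution: "\<tau> p \<in> {1..n}" "\<tau> (\<tau> p) = p" if "p \<in> {1..n}" for p
    using that h_bounds unfolding \<tau>_def by auto
  then have "bij_betw \<tau> {1..n} {1..n}" by (intro bij_betw_byWitness[where f'=\<tau>]) auto
  then have \<sigma>: "bij_betw (u \<circ> \<tau>) {1..n} X" using u by (rule bij_betw_trans)
  have "\<tau> ` {1..h} = {1..h}" unfolding \<tau>_def by auto
  moreover have "\<tau> ` {h + 1..n} = {h + 1..n}"
  proof
    show "\<tau> ` {h + 1..n} \<subseteq> {h + 1..n}" using \<tau>_upper by auto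
    show "{h + 1..n} \<subseteq> \<tau> ` {h + 1..n}"
    proof
      fix x assume "x \<in> {h + 1..n}"
      then have "n + h + 1 - x \<in> {h + 1..n}" "x = \<tau> (n + h + 1 - x)" using \<tau>_upper by auto
      then show "x \<in> \<tau> ` {h + 1..n}" by (rule rev_image_eqI)
    qed
  qed
  ultimately have lower: "(u \<circ> \<tau>) ` {1..h} = u ` {1..h}"
    and upper: "(u \<circ> \<tau>) ` {h + 1..n} = u ` {h + 1..n}"
    by (metis image_comp)+
  interpret red_blue_split V E X Y "u \<circ> \<tau>" n s h "f \<circ> \<tau>"
  proof unfold_locales
    show "bij_betw (u \<circ> \<tau>) {1..n} X" "n \<ge> 3" "s = n \<or> s = n + 1" "h = s div 2"
      using \<sigma> n s h by auto
    show "(f \<circ> \<tau>) p = card (nbhd E ((u \<circ> \<tau>) p) \<inter> Y)" for p using f_eq by simp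
    show "(f \<circ> \<tau>) q \<le> (f \<circ> \<tau>) p" if "1 \<le> p" "p \<le> q" "q \<le> h" for p q
      using that f_antimono h_bounds unfolding \<tau>_def by auto
    show "(f \<circ> \<tau>) p \<le> (f \<circ> \<tau>) q" if "h < p" "p \<le> q" "q \<le> n" for p q
      using that f_antimono[of "n + h + 1 - q" "n + h + 1 - p"] \<tau>_upper by auto
    have "\<tau> h = h" "\<tau> (h + 1) = n" unfolding \<tau>_def by auto
    then show "odd s \<Longrightarrow> 1 \<le> (f \<circ> \<tau>) h \<and>
        \<not> ((f \<circ> \<tau>) (h + 1) = 1 \<and> Y_dominated ((u \<circ> \<tau>) ` {h + 1..n}))"
      and "even s \<Longrightarrow> 1 \<le> (f \<circ> \<tau>) (h + 1) \<and>
        \<not> ((f \<circ> \<tau>) h = 1 \<and> Y_dominated ((u \<circ> \<tau>) ` {1..h}))"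
      using odd_s even_s lower upper by auto
  qed
  have "red_edges \<subseteq> E" unfolding red_edges_def by blast
  then show ?thesis using locally_irregular_red locally_irregular_blue by blast
qed

lemma irregular_bipartition_odd:
  fixes v :: "nat \<Rightarrow> 'a" and d :: "nat \<Rightarrow> nat" and n m :: nat
  assumes v: "bij_betw v {1..n} X"
    and d_eq: "\<And>i. d i = card (nbhd E (v i) \<inter> Y)"
    and d_antimono: "\<And>i j. 1 \<le> i \<Longrightarrow> i \<le> j \<Longrightarrow> j \<le> n \<Longrightarrow> d j \<le> d i"
    and n: "n = 2 * m + 1" "1 \<le> m" and d_m: "1 \<le> d m"
  shows "\<exists>R \<subseteq> E. locally_irregular R \<and> locally_irregular (E - R)"
proof (cases "d n = 1 \<and> Y_dominated (v ` {m + 1..n})")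
  case False
  show ?thesis
    by (rule irregular_bipartition_if_labelling[OF v _ _ _ d_eq d_antimono, where s = n and h = m])
      (use False n d_m in auto)
next
  case True
  have lower: "\<not> (d (m + 1) = 1 \<and> Y_dominated (v ` {1..m + 1}))"
  proof
    assume "d (m + 1) = 1 \<and> Y_dominated (v ` {1..m + 1})"
    then have "Y_dominated (v ` {1..m + 1} \<union> v ` {m + 1..n})"
      using Y_dominated_Un[of _ _ "v (m + 1)"] True d_eq n by auto
    moreover have "v ` {1..m + 1} \<union> v ` {m + 1..n} = X"
      using v n unfolding bij_betw_def by (auto simp: image_Un[symmetric] ivl_disj_un_two_touch)
    ultimately show False using not_Y_dominated_X by simp
  qed
  show ?thesis
    by (rule irregular_bipartition_if_labelling[OF v _ _ _ d_eq d_antimono,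
          where s = "n + 1" and h = "m + 1"])
      (use lower True n in auto)
qed

lemma irregular_bipartition_even_both_dominated:
  fixes v :: "nat \<Rightarrow> 'a" and d :: "nat \<Rightarrow> nat" and n m :: nat
  assumes v: "bij_betw v {1..n} X"
    and d_eq: "\<And>i. d i = card (nbhd E (v i) \<inter> Y)"
    and d_antimono: "\<And>i j. 1 \<le> i \<Longrightarrow> i \<le> j \<Longrightarrow> j \<le> n \<Longrightarrow> d j \<le> d i"
    and n: "n = 2 * m" "2 \<le> m" and d_m: "d m = 1" and d_n: "d n = 1"
    and lower: "Y_dominated (v ` {1..m})" and upper: "Y_dominated (v ` {m + 1..n})"
  shows "\<exists>R \<subseteq> E. locally_irregular R \<and> locally_irregular (E - R)"
proof -
  have "d (m + 1) \<le> d m" "d n \<le> d (m + 1)" using n by (auto intro!: d_antimono)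
  then have d_m1: "d (m + 1) = 1" using d_m d_n by linarith
  \<comment> \<open>Swapping the labels \<open>m\<close> and \<open>m + 1\<close> keeps \<open>d\<close> nonincreasing, but puts \<open>v m\<close> and \<open>v n\<close>,
    whose unique \<open>Y\<close>-neighbours dominate different halves, into the same half.\<close>
  define t where "t i = (if i = m then m + 1 else if i = m + 1 then m else i)" for i
  have "t i \<in> {1..n}" "t (t i) = i" if "i \<in> {1..n}" for i using that n unfolding t_def by auto
  then have "bij_betw t {1..n} {1..n}" by (intro bij_betw_byWitness[where f'=t]) auto
  then have u: "bij_betw (v \<circ> t) {1..n} X" using v by (rule bij_betw_trans)
  have d_t: "d (t i) = d i" for i unfolding t_def using d_m d_m1 by simp
  have u_d_eq: "d i = card (nbhd E ((v \<circ> t) i) \<inter> Y)" for i using d_eq d_t by (metis comp_apply)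
  have upper_swapped: "\<not> Y_dominated ((v \<circ> t) ` {m + 1..n})"
  proof
    let ?C = "(v \<circ> t) ` {m + 1..n}"
    assume C: "Y_dominated ?C"
    have "(v \<circ> t) (m + 1) = v m" "(v \<circ> t) n = v n" using n unfolding t_def by auto
    moreover have "m \<in> {1..m}" "m + 1 \<in> {m + 1..n}" "n \<in> {m + 1..n}" using n by auto
    ultimately have v_m: "v m \<in> v ` {1..m} \<inter> ?C"
      and v_n: "v n \<in> (v ` {1..m} \<union> ?C) \<inter> v ` {m + 1..n}"
      by (metis IntI UnI2 imageI)+
    have "Y_dominated (v ` {1..m} \<union> ?C)" using Y_dominated_Un[OF lower C v_m] d_eq d_m by simp
    then have dominated: "Y_dominated ((v ` {1..m} \<union> ?C) \<union> v ` {m + 1..n})"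
      using Y_dominated_Un[OF _ upper v_n] d_eq d_n by simp
    have "{1..m} \<union> {m + 1..n} = {1..n}" using n by auto
    then have "v ` {1..m} \<union> v ` {m + 1..n} = X" using v by (metis bij_betw_imp_surj_on image_Un)
    moreover have "?C \<subseteq> X" using u n unfolding bij_betw_def by auto
    ultimately have "(v ` {1..m} \<union> ?C) \<union> v ` {m + 1..n} = X" by blast
    with dominated show False using not_Y_dominated_X by simp
  qed
  show ?thesis
    by (rule irregular_bipartition_if_labelling[OF u _ _ _ u_d_eq d_antimono,
          where s = "n + 1" and h = m])
      (use upper_swapped n d_m in auto)
qed

lemma irregular_bipartition_even:
  fixes v :: "nat \<Rightarrow> 'a" and d :: "nat \<Rightarrow> nat" and n m :: nat
  assumes v: "bij_betw v {1..n} X"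
    and d_eq: "\<And>i. d i = card (nbhd E (v i) \<inter> Y)"
    and d_antimono: "\<And>i j. 1 \<le> i \<Longrightarrow> i \<le> j \<Longrightarrow> j \<le> n \<Longrightarrow> d j \<le> d i"
    and n: "n = 2 * m" "2 \<le> m" and d_m: "1 \<le> d m"
  shows "\<exists>R \<subseteq> E. locally_irregular R \<and> locally_irregular (E - R)"
proof -
  consider "\<not> (d n = 1 \<and> Y_dominated (v ` {m + 1..n}))"
    | "d n = 1" "\<not> (d m = 1 \<and> Y_dominated (v ` {1..m}))"
    | "d n = 1" "d m = 1" "Y_dominated (v ` {1..m})" "Y_dominated (v ` {m + 1..n})"
    by blast
  then show ?thesis
  proof cases
    case 1
    show ?thesis
      by (rule irregular_bipartition_if_labelling[OF v _ _ _ d_eq d_antimono,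
            where s = "n + 1" and h = m])
        (use 1 n d_m in auto)
  next
    case 2
    show ?thesis
      by (rule irregular_bipartition_if_labelling[OF v _ _ _ d_eq d_antimono, where s = n and h = m])
        (use 2 n in auto)
  next
    case 3
    then show ?thesis using irregular_bipartition_even_both_dominated[OF v d_eq d_antimono n] by blast
  qed
qed

end

theorem lemma2p4:
  fixes V :: "'a set" and E :: "'a set set" and X Y :: "'a set"
    and n :: nat and v :: "nat \<Rightarrow> 'a" and d :: "nat \<Rightarrow> nat"
  assumes "graph V E"
    and "maximal_clique V E X"
    and "Y = V - X"
    and "stable E Y"
    and "bij_betw v {1..n} X"
    and "\<And>i. d i = card (nbhd E (v i) \<inter> Y)"
    and "\<And>i j. 1 \<le> i \<Longrightarrow> i \<le> j \<Longrightarrow> j \<le> n \<Longrightarrow> d i \<ge> d j"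
    and "d (n div 2) \<ge> 1"
    and "n \<ge> 3"
  shows "decomposable E \<and> chi_irr E \<le> 2"
proof -
  interpret split_graph V E X Y using assms(1-4) by unfold_locales
  define m where "m = n div 2"
  have d_m: "1 \<le> d m" using assms(8) unfolding m_def .
  have "\<exists>R \<subseteq> E. locally_irregular R \<and> locally_irregular (E - R)"
  proof (cases "even n")
    case True
    then have "n = 2 * m" "2 \<le> m" using assms(9) unfolding m_def by auto
    then show ?thesis using irregular_bipartition_even[OF assms(5-7) _ _ d_m] by blast
  next
    case False
    then have "n = 2 * m + 1" "1 \<le> m" using assms(9) unfolding m_def by auto
    then show ?thesis using irregular_bipartition_odd[OF assms(5-7) _ _ d_m] by blast
  qed
  then show ?thesis using chi_irr_le_2_if_irregular_bipartition by blast
qed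

end
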